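(* Fix an active search instance $(h^\star,\mathcal D)$ with $\Pr(V=1)>0$ and costs $c_{\mathrm{rew}},c_{\mathrm{ver}}>0$, and consider the class of streaming policies described in the context. Then there exists a unique $\tau^\star\in(0,1)$ satisfying \[ c_{\mathrm{ver}}\,\mathbb E_{R\sim\mathcal D}\big[(h^\star(R)-\tau^\star)_+\big]=\tau^\star c_{\mathrm{rew}}, \] where $(u)_+=\max\{u,0\}$. Moreover, the optimal expected cost over streaming policies is $J^\star_{\mathrm{str}}(h^\star,\mathcal D)=c_{\mathrm{ver}}/\tau^\star$, and an optimal streaming policy is the threshold rule that verifies the current candidate with score $r$ if $h^\star(r)\ge\tau^\star$ and discards it if $h^\star(r)<\tau^\star$.
   Context: An active search instance $(h^\star,\mathcal D)$: $\mathcal D$ is a distribution on $\mathbb R$ and $h^\star:\mathbb R\to[0,1]$ measurable; a candidate has score $R\sim\mathcal D$ and label $V$ with $\Pr(V=1\mid R=r)=h^\star(r)$. A streaming policy (which knows $(\mathcal D,h^\star)$) proceeds in rounds $i=1,2,\dots$: it draws a fresh score $R_i\sim\mathcal D$ (independent of the past), pays $c_{\mathrm{rew}}$, observes $R_i$, then chooses, as a possibly randomized function of the past history and $R_i$, an action in $\{\text{discard},\text{verify}\}$. Discard removes the candidate permanently. Verify pays $c_{\mathrm{ver}}$ and reveals $V_i$ with $V_i\mid R_i\sim\mathrm{Bernoulli}(h^\star(R_i))$. The policy stops only when it verifies a candidate with $V_i=1$. $J^\star_{\mathrm{str}}(h^\star,\mathcal D)$ is the infimum over streaming policies of the expected total cost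 (sum of all $c_{\mathrm{rew}}$ and $c_{\mathrm{ver}}$ payments until stopping). *)

theory Defs
  imports "HOL-Probability.Probability"
begin

text \<open>A (behavioural, possibly randomized) streaming policy: given the scores seen so far
  (list rs), the actions taken so far (list as; True = verify, False = discard; every verified
  candidate so far had label 0, since otherwise the process stopped) and the current score r,
  it returns the probability of verifying the current candidate.\<close>

definition streaming_policy :: "(real list \<Rightarrow> bool list \<Rightarrow> real \<Rightarrow> real) \<Rightarrow> bool" where
  "streaming_policy \<pi> \<longleftrightarrow>
     (\<forall>rs as r. 0 \<le> \<pi> rs as r \<and> \<pi> rs as r \<le> 1) \<and>
     (\<forall>as. (\<lambda>(x, r). \<pi> (map x [0..<length as]) as r)
              \<in> borel_measurable (PiM {..<length as} (\<lambda>_. borel) \<Otimes>\<^sub>M borel))"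

primrec str_cost_trunc ::
  "real measure \<Rightarrow> (real \<Rightarrow> real) \<Rightarrow> real \<Rightarrow> real \<Rightarrow> (real list \<Rightarrow> bool list \<Rightarrow> real \<Rightarrow> real)
   \<Rightarrow> nat \<Rightarrow> real list \<Rightarrow> bool list \<Rightarrow> ennreal" where
  "str_cost_trunc D h c_rew c_ver \<pi> 0 rs as = 0"
| "str_cost_trunc D h c_rew c_ver \<pi> (Suc k) rs as =
     ennreal c_rew +
     (\<integral>\<^sup>+ r. ennreal (\<pi> rs as r) *
                (ennreal c_ver + ennreal (1 - h r) * str_cost_trunc D h c_rew c_ver \<pi> k (rs @ [r]) (as @ [True]))
            + ennreal (1 - \<pi> rs as r) * str_cost_trunc D h c_rew c_ver \<pi> k (rs @ [r]) (as @ [False]) \<partial>D)"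

definition str_cost ::
  "real measure \<Rightarrow> (real \<Rightarrow> real) \<Rightarrow> real \<Rightarrow> real \<Rightarrow> (real list \<Rightarrow> bool list \<Rightarrow> real \<Rightarrow> real) \<Rightarrow> ennreal" where
  "str_cost D h c_rew c_ver \<pi> = (SUP k. str_cost_trunc D h c_rew c_ver \<pi> k [] [])"

definition J_str :: "real measure \<Rightarrow> (real \<Rightarrow> real) \<Rightarrow> real \<Rightarrow> real \<Rightarrow> ennreal" where
  "J_str D h c_rew c_ver = (INF \<pi> \<in> {\<pi>. streaming_policy \<pi>}. str_cost D h c_rew c_ver \<pi>)"

definition threshold_policy :: "(real \<Rightarrow> real) \<Rightarrow> real \<Rightarrow> real list \<Rightarrow> bool list \<Rightarrow> real \<Rightarrow> real" where
  "threshold_policy h \<tau> rs as r = (if h r \<ge> \<tau> then 1 else 0)"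

end

theory Submission imports Defs begin

text \<open>If \<open>x\<close> is the cost still to be paid after the current round, one more round costs
  \<open>c_rew\<close> plus, for the drawn score \<open>r\<close>, either \<open>c_ver + (1 - h r) * x\<close> (verify) or \<open>x\<close>
  (discard). Iterating this Bellman operator from \<open>0\<close> bounds the \<open>k\<close>-round truncated cost of
  every policy from below, and the iterates increase to a positive fixed point \<open>G\<close>. Writing
  \<open>\<tau> = c_ver / G\<close>, the fixed point equation becomes the threshold equation, whose solution is
  unique since its left side is nonincreasing and its right side strictly increasing in \<open>\<tau>\<close>.
  Finally, the threshold rule at \<open>\<tau>\<close> always takes the cheaper branch of the recursion, so its
  cost never exceeds \<open>G = c_ver / \<tau>\<close>.\<close>

lemma (in prob_space) lipschitz_on_expectation:
  fixes f :: "'b::metric_space \<Rightarrow> 'a \<Rightarrow> real"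
  assumes "0 \<le> C" and "\<And>x. x \<in> S \<Longrightarrow> integrable M (f x)"
    and "\<And>x y \<omega>. x \<in> S \<Longrightarrow> y \<in> S \<Longrightarrow> \<bar>f x \<omega> - f y \<omega>\<bar> \<le> C * dist x y"
  shows "C-lipschitz_on S (\<lambda>x. expectation (f x))"
proof (rule lipschitz_onI)
  fix x y assume xy: "x \<in> S" "y \<in> S"
  have "\<bar>expectation (f x) - expectation (f y)\<bar> = \<bar>expectation (\<lambda>\<omega>. f x \<omega> - f y \<omega>)\<bar>"
    using assms(2) xy by simp
  also have "\<dots> \<le> expectation (\<lambda>\<omega>. \<bar>f x \<omega> - f y \<omega>\<bar>)"
    by (rule integral_abs_bound)
  also have "\<dots> \<le> expectation (\<lambda>\<omega>. C * dist x y)"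
    using assms(2,3) xy by (intro integral_mono) auto
  finally show "dist (expectation (f x)) (expectation (f y)) \<le> C * dist x y"
    by (simp add: dist_real_def prob_space)
qed fact

lemma ennreal_min_le_mixture:
  fixes p a c g :: real and T1 T2 :: ennreal
  assumes "0 \<le> p" "p \<le> 1" "0 \<le> a" "0 \<le> c" "0 \<le> g" "ennreal g \<le> T1" "ennreal g \<le> T2"
  shows "ennreal (min (c + a * g) g) \<le> ennreal p * (ennreal c + ennreal a * T1) + ennreal (1 - p) * T2"
proof -
  have "p * min (c + a * g) g \<le> p * (c + a * g)" "(1 - p) * min (c + a * g) g \<le> (1 - p) * g"
    using assms(1,2) by (simp_all add: mult_left_mono)
  then have "min (c + a * g) g \<le> p * (c + a * g) + (1 - p) * g"
    by (simp add: algebra_simps)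
  then have "ennreal (min (c + a * g) g) \<le> ennreal (p * (c + a * g) + (1 - p) * g)"
    by (rule ennreal_leI)
  also have "\<dots> = ennreal p * (ennreal c + ennreal a * ennreal g) + ennreal (1 - p) * ennreal g"
    using assms by (simp add: ennreal_mult ennreal_plus[symmetric])
  also have "\<dots> \<le> ennreal p * (ennreal c + ennreal a * T1) + ennreal (1 - p) * T2"
    using assms by (intro add_mono mult_left_mono order_refl) auto
  finally show ?thesis .
qed

lemma streaming_policy_threshold_policy:
  assumes "h \<in> borel_measurable borel"
  shows "streaming_policy (threshold_policy h \<tau>)"
proof -
  note assms [measurable]
  have "(\<lambda>(x, r). if \<tau> \<le> h r then 1 else 0 :: real)
      \<in> borel_measurable (Pi\<^sub>M {..<n} (\<lambda>_. borel) \<Otimes>\<^sub>M borel)" for n :: nat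
    by measurable
  then show ?thesis
    unfolding streaming_policy_def threshold_policy_def by simp
qed

locale active_search = prob_space D for D :: "real measure" +
  fixes h :: "real \<Rightarrow> real" and c_rew c_ver :: real
  assumes sets_D: "sets D = sets borel"
    and h_measurable: "h \<in> borel_measurable borel"
    and h_nonneg: "\<And>r. 0 \<le> h r" and h_le_1: "\<And>r. h r \<le> 1"
    and c_rew_pos: "0 < c_rew" and c_ver_pos: "0 < c_ver"
begin

lemma h_measurable_D [measurable]: "h \<in> borel_measurable D"
  using h_measurable by (simp add: measurable_cong_sets[OF sets_D refl])

definition excess :: "real \<Rightarrow> real" where
  "excess \<tau> = (\<integral>r. max (h r - \<tau>) 0 \<partial>D)"

definition bellman :: "real \<Rightarrow> real" where
  "bellman x = c_rew + (\<integral>r. min (c_ver + (1 - h r) * x) x \<partial>D)"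

lemma integrable_excess: "integrable D (\<lambda>r. max (h r - \<tau>) 0)"
proof (rule integrable_const_bound[where B = "\<bar>\<tau>\<bar> + 1"])
  have "norm (max (h r - \<tau>) 0) \<le> \<bar>\<tau>\<bar> + 1" for r
    using h_nonneg[of r] h_le_1[of r] by (auto simp: abs_le_iff max_def)
  then show "AE r in D. norm (max (h r - \<tau>) 0) \<le> \<bar>\<tau>\<bar> + 1"
    by simp
qed simp

lemma integrable_bellman: "integrable D (\<lambda>r. min (c_ver + (1 - h r) * x) x)"
proof (rule integrable_const_bound[where B = "c_ver + 2 * \<bar>x\<bar>"])
  have "norm (min (c_ver + (1 - h r) * x) x) \<le> c_ver + 2 * \<bar>x\<bar>" for r
  proof -
    have "\<bar>(1 - h r) * x\<bar> \<le> \<bar>x\<bar>"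
      using h_nonneg[of r] h_le_1[of r] by (simp add: abs_mult mult_left_le_one_le)
    then show ?thesis
      using c_ver_pos by (auto simp: min_def abs_le_iff)
  qed
  then show "AE r in D. norm (min (c_ver + (1 - h r) * x) x) \<le> c_ver + 2 * \<bar>x\<bar>"
    by simp
qed simp

lemma excess_antimono: "s \<le> \<tau> \<Longrightarrow> excess \<tau> \<le> excess s"
  unfolding excess_def by (intro integral_mono integrable_excess) auto

lemma excess_lipschitz: "1-lipschitz_on UNIV excess"
  unfolding excess_def[abs_def] using integrable_excess
  by (intro lipschitz_on_expectation) (auto simp: dist_real_def max_def)

lemma excess_0: "excess 0 = (\<integral>r. h r \<partial>D)"
  unfolding excess_def using h_nonneg by (simp add: max_absorb1)

lemma excess_1: "excess 1 = 0"
  unfolding excess_def using h_le_1 by (simp add: max_absorb2)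

lemma threshold_eq_exists:
  assumes "(\<integral>r. h r \<partial>D) > 0"
  obtains \<tau> where "\<tau> \<in> {0<..<1}" "c_ver * excess \<tau> = \<tau> * c_rew"
proof -
  let ?F = "\<lambda>\<tau>. c_ver * excess \<tau> - \<tau> * c_rew"
  have "continuous_on {0..1} ?F"
    using lipschitz_on_continuous_on[OF excess_lipschitz]
    by (intro continuous_intros) (auto intro: continuous_on_subset)
  moreover have "?F 1 < 0" "0 < ?F 0"
    using assms c_rew_pos c_ver_pos by (simp_all add: excess_0 excess_1)
  ultimately obtain \<tau> where "0 \<le> \<tau>" "\<tau> \<le> 1" "?F \<tau> = 0"
    using IVT2'[of ?F 1 0 0] by auto
  moreover from this have "\<tau> \<noteq> 0" "\<tau> \<noteq> 1"
    using \<open>?F 1 < 0\<close> \<open>0 < ?F 0\<close> by auto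
  ultimately show ?thesis
    by (intro that) auto
qed

lemma threshold_eq_unique:
  assumes "c_ver * excess s = s * c_rew" and "c_ver * excess \<tau> = \<tau> * c_rew"
  shows "s = \<tau>"
proof -
  have "c_ver * excess s \<le> c_ver * excess \<tau>" if "\<tau> \<le> s" for s \<tau>
    using excess_antimono[OF that] c_ver_pos by simp
  then show ?thesis
    using assms c_rew_pos by (metis linorder_le_cases mult_le_cancel_right_pos order_antisym)
qed

lemma bellman_eq_excess:
  assumes "0 < x"
  shows "bellman x = x + c_rew - x * excess (c_ver / x)"
proof -
  have "min (c_ver + (1 - h r) * x) x = x - x * max (h r - c_ver / x) 0" for r
    using assms by (simp add: min_def max_def field_simps)
  then have "(\<integral>r. min (c_ver + (1 - h r) * x) x \<partial>D) = (\<integral>r. x - x * max (h r - c_ver / x) 0 \<partial>D)"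
    by simp
  also have "\<dots> = x - x * excess (c_ver / x)"
    unfolding excess_def using integrable_excess by (simp add: prob_space)
  finally show ?thesis
    unfolding bellman_def by simp
qed

text \<open>Verifying pays off at a continuation cost \<open>G\<close> exactly when \<open>c_ver + (1 - h r) * G \<le> G\<close>,
  i.e. when \<open>h r \<ge> c_ver / G\<close>.\<close>

lemma bellman_fixed_iff:
  assumes "0 < x"
  shows "bellman x = x \<longleftrightarrow> c_ver * excess (c_ver / x) = (c_ver / x) * c_rew"
proof -
  have *: "c_rew = x * e \<longleftrightarrow> c_ver * e = (c_ver / x) * c_rew" for e
    using assms c_ver_pos by (auto simp: field_simps)
  have "bellman x = x \<longleftrightarrow> c_rew = x * excess (c_ver / x)"
    using assms by (auto simp: bellman_eq_excess)
  then show ?thesis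
    by (simp only: *)
qed

lemma bellman_mono:
  assumes "x \<le> y"
  shows "bellman x \<le> bellman y"
proof -
  have "min (c_ver + (1 - h r) * x) x \<le> min (c_ver + (1 - h r) * y) y" for r
  proof -
    have "(1 - h r) * x \<le> (1 - h r) * y"
      using assms h_le_1[of r] by (intro mult_left_mono) auto
    then show ?thesis
      using assms by (auto simp: min_def)
  qed
  then show ?thesis
    unfolding bellman_def by (intro add_left_mono integral_mono integrable_bellman)
qed

lemma bellman_lipschitz: "1-lipschitz_on UNIV bellman"
proof -
  have "\<bar>min (c_ver + (1 - h r) * x) x - min (c_ver + (1 - h r) * y) y\<bar> \<le> 1 * dist x y" for r x y
  proof -
    have "\<bar>(1 - h r) * x - (1 - h r) * y\<bar> \<le> \<bar>x - y\<bar>"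
      using h_nonneg[of r] h_le_1[of r]
      by (simp add: right_diff_distrib[symmetric] abs_mult mult_left_le_one_le)
    then show ?thesis
      by (auto simp: dist_real_def min_def abs_le_iff)
  qed
  then have "1-lipschitz_on UNIV (\<lambda>x. \<integral>r. min (c_ver + (1 - h r) * x) x \<partial>D)"
    by (intro lipschitz_on_expectation integrable_bellman) auto
  then show ?thesis
    unfolding bellman_def[abs_def] by (simp add: lipschitz_on_def dist_real_def)
qed

lemma bellman_ge_c_rew:
  assumes "0 \<le> x"
  shows "c_rew \<le> bellman x"
proof -
  have "0 \<le> min (c_ver + (1 - h r) * x) x" for r
    using assms h_le_1[of r] c_ver_pos by simp
  then show ?thesis
    unfolding bellman_def by (simp add: integral_nonneg_AE)
qed

lemma bellman_fixed_threshold: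
  assumes "0 < \<tau>" and "c_ver * excess \<tau> = \<tau> * c_rew"
  shows "bellman (c_ver / \<tau>) = c_ver / \<tau>"
  using assms c_ver_pos by (simp add: bellman_fixed_iff)

lemma ennreal_bellman:
  assumes "0 \<le> x"
  shows "ennreal (bellman x) = ennreal c_rew + (\<integral>\<^sup>+ r. ennreal (min (c_ver + (1 - h r) * x) x) \<partial>D)"
proof -
  have nonneg: "0 \<le> min (c_ver + (1 - h r) * x) x" for r
    using assms h_le_1[of r] c_ver_pos by simp
  then have "(\<integral>\<^sup>+ r. ennreal (min (c_ver + (1 - h r) * x) x) \<partial>D)
      = ennreal (\<integral>r. min (c_ver + (1 - h r) * x) x \<partial>D)"
    by (intro nn_integral_eq_integral integrable_bellman) simp
  then show ?thesis
    using nonneg c_rew_pos by (simp add: bellman_def integral_nonneg_AE)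
qed

definition value_iter :: "nat \<Rightarrow> real" where
  "value_iter k = (bellman ^^ k) 0"

lemma value_iter_0 [simp]: "value_iter 0 = 0"
  and value_iter_Suc [simp]: "value_iter (Suc k) = bellman (value_iter k)"
  by (simp_all add: value_iter_def)

lemma value_iter_nonneg: "0 \<le> value_iter k"
proof (induction k)
  case (Suc k)
  then show ?case
    using bellman_ge_c_rew[OF Suc.IH] c_rew_pos by simp
qed simp

lemma incseq_value_iter: "incseq value_iter"
proof (rule incseq_SucI)
  show "value_iter k \<le> value_iter (Suc k)" for k
  proof (induction k)
    case 0
    then show ?case
      using bellman_ge_c_rew[of 0] c_rew_pos by simp
  qed (simp add: bellman_mono)
qed

lemma value_iter_le:
  assumes "bellman x \<le> x" and "0 \<le> x"
  shows "value_iter k \<le> x"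
proof (induction k)
  case (Suc k)
  then show ?case
    using bellman_mono[OF Suc.IH] assms(1) by simp
qed (simp add: assms(2))

text \<open>Value iteration increases to a fixed point of the continuous operator \<open>bellman\<close>, which is
  positive and hence, by uniqueness of the threshold, equal to \<open>c_ver / \<tau>\<close>.\<close>

lemma value_iter_tendsto:
  assumes "0 < \<tau>" and \<tau>: "c_ver * excess \<tau> = \<tau> * c_rew"
  shows "value_iter \<longlonglongrightarrow> c_ver / \<tau>"
proof -
  have "0 \<le> c_ver / \<tau>"
    using assms c_ver_pos by simp
  then obtain L where L: "value_iter \<longlonglongrightarrow> L" "\<And>k. value_iter k \<le> L"
    using incseq_convergent[OF incseq_value_iter]
      value_iter_le[of "c_ver / \<tau>"] bellman_fixed_threshold[OF assms] by (metis order_refl)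
  have "isCont bellman L"
    using lipschitz_on_continuous_on[OF bellman_lipschitz] by (simp add: continuous_on_eq_continuous_at)
  then have "(\<lambda>k. value_iter (Suc k)) \<longlonglongrightarrow> bellman L"
    using L(1) by (simp add: isCont_tendsto_compose)
  then have "bellman L = L"
    using LIMSEQ_Suc[OF L(1)] LIMSEQ_unique by blast
  moreover have "0 < L"
    using L(2)[of 1] bellman_ge_c_rew[of 0] c_rew_pos by simp
  ultimately have "c_ver / L = \<tau>"
    using threshold_eq_unique[OF _ \<tau>] by (simp add: bellman_fixed_iff)
  then have "L = c_ver / \<tau>"
    using \<open>0 < L\<close> \<open>0 < \<tau>\<close> by (auto simp: field_simps)
  then show ?thesis
    using L(1) by simp
qed

lemma value_iter_le_str_cost_trunc:
  assumes "streaming_policy \<pi>"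
  shows "ennreal (value_iter k) \<le> str_cost_trunc D h c_rew c_ver \<pi> k rs as"
proof (induction k arbitrary: rs as)
  case (Suc k)
  have "0 \<le> \<pi> rs as r" "\<pi> rs as r \<le> 1" for r
    using assms unfolding streaming_policy_def by auto
  then show ?case
    unfolding str_cost_trunc.simps value_iter_Suc ennreal_bellman[OF value_iter_nonneg]
    using h_le_1 c_ver_pos value_iter_nonneg[of k]
    by (intro add_left_mono nn_integral_mono ennreal_min_le_mixture Suc.IH) auto
qed simp

text \<open>The threshold \<open>c_ver / G\<close> makes the policy take the cheaper branch of \<open>bellman G\<close>
  at every score.\<close>

lemma str_cost_trunc_threshold_le:
  assumes "0 < G" and "bellman G \<le> G"
  shows "str_cost_trunc D h c_rew c_ver (threshold_policy h (c_ver / G)) k rs as \<le> ennreal G"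
proof (induction k arbitrary: rs as)
  case (Suc k)
  let ?T = "str_cost_trunc D h c_rew c_ver (threshold_policy h (c_ver / G)) k"
  have step: "ennreal (threshold_policy h (c_ver / G) rs as r) *
        (ennreal c_ver + ennreal (1 - h r) * ?T (rs @ [r]) (as @ [True]))
      + ennreal (1 - threshold_policy h (c_ver / G) rs as r) * ?T (rs @ [r]) (as @ [False])
      \<le> ennreal (min (c_ver + (1 - h r) * G) G)" for r
  proof (cases "c_ver / G \<le> h r")
    case True
    then have "c_ver + (1 - h r) * G \<le> G"
      using assms by (simp add: field_simps)
    moreover have "ennreal c_ver + ennreal (1 - h r) * ?T (rs @ [r]) (as @ [True])
        \<le> ennreal c_ver + ennreal (1 - h r) * ennreal G"
      by (intro add_left_mono mult_left_mono Suc.IH) simp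
    moreover have "threshold_policy h (c_ver / G) rs as r = 1"
      using True by (simp add: threshold_policy_def)
    ultimately show ?thesis
      using h_le_1[of r] c_ver_pos assms by (simp add: min_absorb1 ennreal_mult)
  next
    case False
    then have "G \<le> c_ver + (1 - h r) * G"
      using assms by (simp add: field_simps)
    moreover have "threshold_policy h (c_ver / G) rs as r = 0"
      using False by (simp add: threshold_policy_def)
    ultimately show ?thesis
      using Suc.IH by (simp add: min_absorb2)
  qed
  have "str_cost_trunc D h c_rew c_ver (threshold_policy h (c_ver / G)) (Suc k) rs as
      \<le> ennreal (bellman G)"
    unfolding str_cost_trunc.simps ennreal_bellman[OF less_imp_le[OF assms(1)]]
    by (intro add_left_mono nn_integral_mono step)
  also have "\<dots> \<le> ennreal G"
    using assms(2) by (rule ennreal_leI)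
  finally show ?case .
qed simp

theorem threshold_policy_optimal:
  assumes "0 < \<tau>" and "c_ver * excess \<tau> = \<tau> * c_rew"
  shows "str_cost D h c_rew c_ver (threshold_policy h \<tau>) = ennreal (c_ver / \<tau>)"
    and "J_str D h c_rew c_ver = ennreal (c_ver / \<tau>)"
proof -
  have lower: "ennreal (c_ver / \<tau>) \<le> str_cost D h c_rew c_ver \<pi>" if "streaming_policy \<pi>" for \<pi>
  proof (rule LIMSEQ_le_const2)
    show "(\<lambda>k. ennreal (value_iter k)) \<longlonglongrightarrow> ennreal (c_ver / \<tau>)"
      using value_iter_tendsto[OF assms] by (rule tendsto_ennrealI)
    show "\<exists>N. \<forall>k\<ge>N. ennreal (value_iter k) \<le> str_cost D h c_rew c_ver \<pi>"
      unfolding str_cost_def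
      using value_iter_le_str_cost_trunc[OF that] by (blast intro: SUP_upper2)
  qed
  have "str_cost D h c_rew c_ver (threshold_policy h (c_ver / (c_ver / \<tau>))) \<le> ennreal (c_ver / \<tau>)"
    using assms c_ver_pos bellman_fixed_threshold[OF assms] unfolding str_cost_def
    by (intro SUP_least str_cost_trunc_threshold_le) simp_all
  then have upper: "str_cost D h c_rew c_ver (threshold_policy h \<tau>) \<le> ennreal (c_ver / \<tau>)"
    using c_ver_pos by simp
  have policy: "streaming_policy (threshold_policy h \<tau>)"
    using h_measurable by (rule streaming_policy_threshold_policy)
  show "str_cost D h c_rew c_ver (threshold_policy h \<tau>) = ennreal (c_ver / \<tau>)"
    using upper lower[OF policy] by (rule antisym)
  then show "J_str D h c_rew c_ver = ennreal (c_ver / \<tau>)"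
    unfolding J_str_def using policy lower
    by (intro antisym INF_greatest) (auto intro: INF_lower2)
qed

end

theorem lemma1:
  fixes D :: "real measure" and h :: "real \<Rightarrow> real" and c_rew c_ver :: real
  assumes "prob_space D" and "sets D = sets borel"
    and "h \<in> borel_measurable borel"
    and "\<And>r. 0 \<le> h r \<and> h r \<le> 1"
    and "(\<integral>r. h r \<partial>D) > 0"
    and "c_rew > 0" and "c_ver > 0"
  shows "(\<exists>!\<tau>. \<tau> \<in> {0<..<1} \<and> c_ver * (\<integral>r. max (h r - \<tau>) 0 \<partial>D) = \<tau> * c_rew)
    \<and> (\<forall>\<tau>. \<tau> \<in> {0<..<1} \<and> c_ver * (\<integral>r. max (h r - \<tau>) 0 \<partial>D) = \<tau> * c_rew \<longrightarrow>
          J_str D h c_rew c_ver = ennreal (c_ver / \<tau>)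
        \<and> streaming_policy (threshold_policy h \<tau>)
        \<and> str_cost D h c_rew c_ver (threshold_policy h \<tau>) = J_str D h c_rew c_ver)"
proof -
  interpret active_search D h c_rew c_ver
    using assms by (intro active_search.intro active_search_axioms.intro) auto
  obtain \<tau>\<^sub>0 where \<tau>\<^sub>0: "\<tau>\<^sub>0 \<in> {0<..<1}" "c_ver * excess \<tau>\<^sub>0 = \<tau>\<^sub>0 * c_rew"
    using threshold_eq_exists assms(5) by blast
  show ?thesis
    unfolding excess_def[symmetric]
  proof (intro conjI allI impI)
    show "\<exists>!\<tau>. \<tau> \<in> {0<..<1} \<and> c_ver * excess \<tau> = \<tau> * c_rew"
    proof (rule ex1I[of _ \<tau>\<^sub>0])
      fix \<tau> assume "\<tau> \<in> {0<..<1} \<and> c_ver * excess \<tau> = \<tau> * c_rew"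
      then show "\<tau> = \<tau>\<^sub>0"
        using \<tau>\<^sub>0(2) by (auto intro: threshold_eq_unique)
    qed (use \<tau>\<^sub>0 in simp)
  next
    fix \<tau> assume "\<tau> \<in> {0<..<1} \<and> c_ver * excess \<tau> = \<tau> * c_rew"
    then have "0 < \<tau>" and "c_ver * excess \<tau> = \<tau> * c_rew"
      by auto
    note optimal = threshold_policy_optimal[OF this]
    show "J_str D h c_rew c_ver = ennreal (c_ver / \<tau>)"
      by (rule optimal(2))
    show "streaming_policy (threshold_policy h \<tau>)"
      using h_measurable by (rule streaming_policy_threshold_policy)
    show "str_cost D h c_rew c_ver (threshold_policy h \<tau>) = J_str D h c_rew c_ver"
      unfolding optimal ..
  qed
qed

end
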